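(* For every formula $\varphi$ of $\mathcal L^{\bigcirc}_\square$: $\varphi$ is derivable in $\mathbf{K4C}$ if and only if $\varphi$ is valid, with respect to the $d$-semantics, on every dynamic topological system $\langle X,\tau,f\rangle$ whose underlying space $\langle X,\tau\rangle$ is a $T_D$ space.
   Context: Fix a non-empty set $\mathsf{PV}$ of propositional variables. The language $\mathcal L^{\bigcirc}_\square$ is given by $\varphi::= p\mid \varphi\wedge\varphi\mid\neg\varphi\mid\square\varphi\mid\bigcirc\varphi$ with $p\in\mathsf{PV}$. Axioms and rules: Taut; K: $\square(\varphi\to\psi)\to(\square\varphi\to\square\psi)$; 4: $\square\varphi\to\square\square\varphi$; ${\rm Next}_\neg$: $\neg\bigcirc\varphi\leftrightarrow\bigcirc\neg\varphi$; ${\rm Next}_\wedge$: $\bigcirc(\varphi\wedge\psi)\leftrightarrow\bigcirc\varphi\wedge\bigcirc\psi$; C: $\bigcirc\varphi\wedge\bigcirc\square\varphi\to\square\bigcirc\varphi$; rules modus ponens, ${\rm Nec}_\square$, ${\rm Nec}_\bigcirc$. $\mathbf{K4C}$ is axiomatised by Taut, K, 4, ${\rm Next}_\neg$, ${\rm Next}_\wedge$, C and closed under these rules. A $T_D$ space is a topological space in which every singleton $\{x\}$ equals $U\cap F$ for some open $U$ and closed $F$. A dynamic topological system (DTS) is $\langle X,\tau,f\rangle$ with $f\colon X\to X$ continuous. The Cantor derivative $d(A)$ of $A\subseteq X$ is the set of $x$ in the closure of $A\setminus\{x\}$. Under a valuation $\nu\colon\mathsf{PV}\to\wp(X)$: $\|p\|=\nu(p)$,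 $\|\neg\varphi\|=X\setminus\|\varphi\|$, $\|\varphi\wedge\psi\|=\|\varphi\|\cap\|\psi\|$, $\|\square\varphi\|=X\setminus d(\|\neg\varphi\|)$, $\|\bigcirc\varphi\|=f^{-1}(\|\varphi\|)$. Valid on a DTS means the truth set is $X$ under every valuation. *)

theory Defs
  imports "HOL-Analysis.Analysis"
begin

datatype 'pv fm =
    Var 'pv
  | And "'pv fm" "'pv fm"
  | Neg "'pv fm"
  | Box "'pv fm"
  | Next "'pv fm"

definition Imp :: "'pv fm \<Rightarrow> 'pv fm \<Rightarrow> 'pv fm" where
  "Imp a b = Neg (And a (Neg b))"

definition Iff :: "'pv fm \<Rightarrow> 'pv fm \<Rightarrow> 'pv fm" where
  "Iff a b = And (Imp a b) (Imp b a)"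

section \<open>Propositional tautologies (modal subformulas treated as atoms)\<close>

fun tv :: "('pv fm \<Rightarrow> bool) \<Rightarrow> 'pv fm \<Rightarrow> bool" where
  "tv v (Var p) = v (Var p)"
| "tv v (And a b) = (tv v a \<and> tv v b)"
| "tv v (Neg a) = (\<not> tv v a)"
| "tv v (Box a) = v (Box a)"
| "tv v (Next a) = v (Next a)"

definition taut :: "'pv fm \<Rightarrow> bool" where
  "taut \<phi> \<longleftrightarrow> (\<forall>v. tv v \<phi>)"

inductive K4C :: "'pv fm \<Rightarrow> bool" where
  Taut: "taut \<phi> \<Longrightarrow> K4C \<phi>"
| K: "K4C (Imp (Box (Imp \<phi> \<psi>)) (Imp (Box \<phi>) (Box \<psi>)))"
| Four: "K4C (Imp (Box \<phi>) (Box (Box \<phi>)))"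
| Next_neg: "K4C (Iff (Neg (Next \<phi>)) (Next (Neg \<phi>)))"
| Next_and: "K4C (Iff (Next (And \<phi> \<psi>)) (And (Next \<phi>) (Next \<psi>)))"
| C: "K4C (Imp (And (Next \<phi>) (Next (Box \<phi>))) (Box (Next \<phi>)))"
| MP: "K4C (Imp \<phi> \<psi>) \<Longrightarrow> K4C \<phi> \<Longrightarrow> K4C \<psi>"
| Nec_box: "K4C \<phi> \<Longrightarrow> K4C (Box \<phi>)"
| Nec_next: "K4C \<phi> \<Longrightarrow> K4C (Next \<phi>)"

fun tset :: "'a topology \<Rightarrow> ('a \<Rightarrow> 'a) \<Rightarrow> ('pv \<Rightarrow> 'a set) \<Rightarrow> 'pv fm \<Rightarrow> 'a set" where
  "tset T f V (Var p) = V p"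
| "tset T f V (And a b) = tset T f V a \<inter> tset T f V b"
| "tset T f V (Neg a) = topspace T - tset T f V a"
| "tset T f V (Box a) = topspace T - (T derived_set_of (topspace T - tset T f V a))"
| "tset T f V (Next a) = {x \<in> topspace T. f x \<in> tset T f V a}"

definition TD_space :: "'a topology \<Rightarrow> bool" where
  "TD_space T \<longleftrightarrow>
     (\<forall>x\<in>topspace T. \<exists>U F. openin T U \<and> closedin T F \<and> {x} = U \<inter> F)"

definition DTS :: "'a topology \<Rightarrow> ('a \<Rightarrow> 'a) \<Rightarrow> bool" where
  "DTS T f \<longleftrightarrow> continuous_map T T f"

definition valid_in :: "'a topology \<Rightarrow> ('a \<Rightarrow> 'a) \<Rightarrow> 'pv fm \<Rightarrow> bool" where
  "valid_in T f \<phi> \<longleftrightarrow>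
     (\<forall>V. (\<forall>p. V p \<subseteq> topspace T) \<longrightarrow> tset T f V \<phi> = topspace T)"

definition valid_TD :: "'a itself \<Rightarrow> 'pv fm \<Rightarrow> bool" where
  "valid_TD (_::'a itself) \<phi> \<longleftrightarrow>
     (\<forall>(T::'a topology) f. TD_space T \<and> DTS T f \<longrightarrow> valid_in T f \<phi>)"

end

theory Submission
  imports Defs "HOL-Library.Prefix_Order"
begin

text \<open>Soundness is routine except for two axioms. Axiom 4 holds because in a \<open>T\<^sub>D\<close>
  space every derived set is closed, and axiom C holds because the preimage under a continuous
  map of a neighbourhood witnessing \<open>f x \<notin> d(A)\<close> witnesses \<open>x \<notin> d(f\<^sup>-\<^sup>1 A)\<close>.

  For completeness, let \<open>R\<close> be the canonical box relation on maximal consistent sets and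
  \<open>\<Gamma> \<mapsto> {\<phi>. \<circle>\<phi> \<in> \<Gamma>}\<close> the canonical next map. The points of the countermodel are the
  finite \<open>R\<close>-chains of maximal consistent sets, evaluated at their last element, with the
  up-set topology of the prefix order. A chain lies in the derived set of \<open>A\<close> iff some proper
  extension of it lies in \<open>A\<close>; since \<open>R\<close> is transitive (axiom 4), the last elements of the
  proper extensions are exactly the \<open>R\<close>-successors of its last element, so \<open>\<box>\<close> is
  interpreted correctly. The prefix order is a partial order, which makes the space \<open>T\<^sub>D\<close>.
  The dynamics applies the next map to every element of a chain and removes adjacent
  duplicates. Axiom C says that the next map sends an \<open>R\<close>-step to an \<open>R\<close>-step or to an
  equality, so the result is again a chain; it is prefix-monotone, hence continuous.
  Finally, validity transfers along injections of the carrier type by pulling the topology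
  back along the inverse.\<close>

lemma tv_Imp [simp]: "tv v (Imp a b) \<longleftrightarrow> (tv v a \<longrightarrow> tv v b)"
  by (simp add: Imp_def)

lemma tv_Iff [simp]: "tv v (Iff a b) \<longleftrightarrow> (tv v a \<longleftrightarrow> tv v b)"
  by (auto simp add: Iff_def)

definition Top :: "'pv fm" where
  "Top = Imp (Var undefined) (Var undefined)"

lemma tv_Top [simp]: "tv v Top"
  by (simp add: Top_def)

fun conjs :: "'pv fm list \<Rightarrow> 'pv fm" where
  "conjs [] = Top"
| "conjs (a # L) = And a (conjs L)"

lemma tv_conjs [simp]: "tv v (conjs L) \<longleftrightarrow> (\<forall>a\<in>set L. tv v a)"
  by (induction L) auto

lemma K4C_tautI: "(\<And>v. tv v \<phi>) \<Longrightarrow> K4C \<phi>"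
  by (simp add: K4C.Taut taut_def)

lemma K4C_conjs: "(\<And>a. a \<in> set L \<Longrightarrow> K4C a) \<Longrightarrow> K4C (conjs L)"
proof (induction L)
  case Nil
  show ?case by (rule K4C_tautI) simp
next
  case (Cons a L)
  have "K4C (Imp a (Imp (conjs L) (And a (conjs L))))"
    by (rule K4C_tautI) simp
  with Cons show ?case by (auto intro: K4C.MP)
qed

lemma K4C_tautological_consequence:
  assumes "\<And>a. a \<in> set L \<Longrightarrow> K4C a" and "\<And>v. \<forall>a\<in>set L. tv v a \<Longrightarrow> tv v \<psi>"
  shows "K4C \<psi>"
proof -
  have "K4C (Imp (conjs L) \<psi>)"
    using assms(2) by (intro K4C_tautI) simp
  then show ?thesis
    using K4C_conjs[OF assms(1)] by (rule K4C.MP)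
qed

lemma K4C_Box_mono: "K4C (Imp a b) \<Longrightarrow> K4C (Imp (Box a) (Box b))"
  using K4C.MP[OF K4C.K K4C.Nec_box] .

lemma K4C_Next_mono:
  assumes "K4C (Imp a b)"
  shows "K4C (Imp (Next a) (Next b))"
proof -
  have "K4C (Next (Imp a b))"
    using assms by (rule K4C.Nec_next)
  show ?thesis
    by (rule K4C_tautological_consequence[of "[Next (Imp a b),
          Iff (Neg (Next (And a (Neg b)))) (Next (Neg (And a (Neg b)))),
          Iff (Next (And a (Neg b))) (And (Next a) (Next (Neg b))),
          Iff (Neg (Next b)) (Next (Neg b))]"])
      (use \<open>K4C (Next (Imp a b))\<close> K4C.Next_neg K4C.Next_and in \<open>auto simp: Imp_def\<close>)
qed

lemma K4C_Box_conjs: "K4C (Imp (conjs (map Box L)) (Box (conjs L)))"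
proof (induction L)
  case Nil
  show ?case
    by (rule K4C_tautological_consequence[of "[Box Top]"])
      (use K4C.Nec_box[OF K4C_tautI[of Top]] in auto)
next
  case (Cons a L)
  have "K4C (Imp (Box a) (Box (Imp (conjs L) (And a (conjs L)))))"
    by (rule K4C_Box_mono, rule K4C_tautI) simp
  show ?case
    by (rule K4C_tautological_consequence[of "[Imp (conjs (map Box L)) (Box (conjs L)),
          Imp (Box a) (Box (Imp (conjs L) (And a (conjs L)))),
          Imp (Box (Imp (conjs L) (And a (conjs L)))) (Imp (Box (conjs L)) (Box (And a (conjs L))))]"])
      (use Cons \<open>K4C (Imp (Box a) _)\<close> K4C.K in auto)
qed

lemma K4C_Next_conjs: "K4C (Imp (conjs (map Next L)) (Next (conjs L)))"
proof (induction L)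
  case Nil
  show ?case
    by (rule K4C_tautological_consequence[of "[Next Top]"])
      (use K4C.Nec_next[OF K4C_tautI[of Top]] in auto)
next
  case (Cons a L)
  show ?case
    by (rule K4C_tautological_consequence[of "[Imp (conjs (map Next L)) (Next (conjs L)),
          Iff (Next (And a (conjs L))) (And (Next a) (Next (conjs L)))]"])
      (use Cons K4C.Next_and in auto)
qed

section \<open>Maximal consistent sets\<close>

definition consistent :: "'pv fm set \<Rightarrow> bool" where
  "consistent S \<longleftrightarrow> \<not> (\<exists>L. set L \<subseteq> S \<and> K4C (Neg (conjs L)))"

definition MCS :: "'pv fm set \<Rightarrow> bool" where
  "MCS G \<longleftrightarrow> consistent G \<and> (\<forall>\<phi>. \<phi> \<notin> G \<longrightarrow> \<not> consistent (insert \<phi> G))"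

lemma MCS_derivable:
  assumes G: "MCS G" and L: "set L \<subseteq> G" and d: "K4C (Imp (conjs L) \<psi>)"
  shows "\<psi> \<in> G"
proof (rule ccontr)
  assume "\<psi> \<notin> G"
  with G obtain L' where L': "set L' \<subseteq> insert \<psi> G" "K4C (Neg (conjs L'))"
    by (auto simp: MCS_def consistent_def)
  let ?L = "L @ filter (\<lambda>a. a \<noteq> \<psi>) L'"
  have "K4C (Neg (conjs ?L))"
    by (rule K4C_tautological_consequence[of "[Imp (conjs L) \<psi>, Neg (conjs L')]"])
      (use d L' in auto)
  moreover have "set ?L \<subseteq> G"
    using L L'(1) by auto
  ultimately show False
    using G by (auto simp: MCS_def consistent_def)
qed

lemma MCS_K4C: "MCS G \<Longrightarrow> K4C \<psi> \<Longrightarrow> \<psi> \<in> G"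
  using MCS_derivable[of G "[]"] K4C_tautological_consequence[of "[\<psi>]"] by simp

lemma MCS_K4C_Imp: "MCS G \<Longrightarrow> K4C (Imp a b) \<Longrightarrow> a \<in> G \<Longrightarrow> b \<in> G"
  using MCS_derivable[of G "[a]"] K4C_tautological_consequence[of "[Imp a b]"] by simp

lemma MCS_Neg:
  assumes G: "MCS G"
  shows "Neg a \<in> G \<longleftrightarrow> a \<notin> G"
proof
  assume "Neg a \<in> G"
  show "a \<notin> G"
  proof
    assume "a \<in> G"
    with \<open>Neg a \<in> G\<close> have "set [a, Neg a] \<subseteq> G"
      by simp
    moreover have "K4C (Neg (conjs [a, Neg a]))"
      by (rule K4C_tautI) simp
    ultimately show False
      using G unfolding MCS_def consistent_def by blast
  qed
next
  assume "a \<notin> G"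
  with G obtain L where L: "set L \<subseteq> insert a G" "K4C (Neg (conjs L))"
    by (auto simp: MCS_def consistent_def)
  have "K4C (Imp (conjs (filter (\<lambda>b. b \<noteq> a) L)) (Neg a))"
    by (rule K4C_tautological_consequence[of "[Neg (conjs L)]"]) (use L in auto)
  then show "Neg a \<in> G"
    by (rule MCS_derivable[OF G, rotated]) (use L in auto)
qed

lemma MCS_And:
  assumes G: "MCS G"
  shows "And a b \<in> G \<longleftrightarrow> a \<in> G \<and> b \<in> G"
proof
  show "And a b \<in> G \<Longrightarrow> a \<in> G \<and> b \<in> G"
    using MCS_K4C_Imp[OF G] K4C_tautI[of "Imp (And a b) a"] K4C_tautI[of "Imp (And a b) b"]
    by auto
  show "a \<in> G \<and> b \<in> G \<Longrightarrow> And a b \<in> G"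
    by (rule MCS_derivable[OF G, of "[a, b]"]) (auto intro: K4C_tautI)
qed

lemma MCS_Imp: "MCS G \<Longrightarrow> Imp a b \<in> G \<longleftrightarrow> (a \<in> G \<longrightarrow> b \<in> G)"
  by (simp add: Imp_def MCS_Neg MCS_And)

lemma MCS_if_consistent_complete:
  assumes "consistent G" and "\<And>\<phi>. \<phi> \<in> G \<or> Neg \<phi> \<in> G"
  shows "MCS G"
  unfolding MCS_def
proof (intro conjI allI impI assms(1))
  fix \<phi>
  assume "\<phi> \<notin> G"
  then have "set [\<phi>, Neg \<phi>] \<subseteq> insert \<phi> G"
    using assms(2) by auto
  moreover have "K4C (Neg (conjs [\<phi>, Neg \<phi>]))"
    by (rule K4C_tautI) simp
  ultimately show "\<not> consistent (insert \<phi> G)"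
    unfolding consistent_def by blast
qed

lemma MCS_subset_eq: "MCS G \<Longrightarrow> MCS H \<Longrightarrow> G \<subseteq> H \<Longrightarrow> G = H"
  by (metis MCS_Neg subsetD subset_antisym subsetI)

lemma Lindenbaum:
  assumes "consistent S"
  obtains G where "S \<subseteq> G" "MCS G"
proof -
  let ?A = "{G. S \<subseteq> G \<and> consistent G}"
  have "\<Union>C \<in> ?A" if C: "C \<noteq> {}" "subset.chain ?A C" for C
  proof -
    have "consistent (\<Union>C)"
      unfolding consistent_def
    proof
      assume "\<exists>L. set L \<subseteq> \<Union>C \<and> K4C (Neg (conjs L))"
      then obtain L where L: "set L \<subseteq> \<Union>C" "K4C (Neg (conjs L))"
        by blast
      obtain B where "B \<in> C" "set L \<subseteq> B"
        using finite_subset_Union_chain[OF _ L(1) C] by blast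
      with L(2) C(2) show False
        by (auto simp: subset.chain_def consistent_def)
    qed
    moreover have "S \<subseteq> \<Union>C"
      using C unfolding subset.chain_def by blast
    ultimately show ?thesis
      by blast
  qed
  then obtain M where M: "M \<in> ?A" "\<forall>X\<in>?A. M \<subseteq> X \<longrightarrow> X = M"
    using subset_Zorn_nonempty[of ?A] assms by blast
  have "MCS M"
    unfolding MCS_def
  proof (intro conjI allI impI)
    show "consistent M"
      using M by simp
    show "\<not> consistent (insert \<phi> M)" if "\<phi> \<notin> M" for \<phi>
      using M that by blast
  qed
  with M(1) show thesis
    using that by blast
qed

definition canonical_rel :: "'pv fm set \<Rightarrow> 'pv fm set \<Rightarrow> bool" where
  "canonical_rel G H \<longleftrightarrow> (\<forall>\<phi>. Box \<phi> \<in> G \<longrightarrow> \<phi> \<in> H)"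

definition next_set :: "'pv fm set \<Rightarrow> 'pv fm set" where
  "next_set G = {\<phi>. Next \<phi> \<in> G}"

lemma canonical_rel_trans:
  "MCS G \<Longrightarrow> canonical_rel G H \<Longrightarrow> canonical_rel H E \<Longrightarrow> canonical_rel G E"
  unfolding canonical_rel_def by (meson MCS_K4C_Imp K4C.Four)

lemma canonical_rel_witness:
  assumes G: "MCS G" and "Box \<phi> \<notin> G"
  obtains H where "MCS H" "canonical_rel G H" "\<phi> \<notin> H"
proof -
  let ?S = "insert (Neg \<phi>) {\<psi>. Box \<psi> \<in> G}"
  have "consistent ?S"
    unfolding consistent_def
  proof
    assume "\<exists>L. set L \<subseteq> ?S \<and> K4C (Neg (conjs L))"
    then obtain L where L: "set L \<subseteq> ?S" "K4C (Neg (conjs L))"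
      by blast
    let ?L = "filter (\<lambda>\<psi>. \<psi> \<noteq> Neg \<phi>) L"
    have "K4C (Imp (conjs ?L) \<phi>)"
      by (rule K4C_tautological_consequence[of "[Neg (conjs L)]"]) (use L in auto)
    then have "K4C (Imp (Box (conjs ?L)) (Box \<phi>))"
      by (rule K4C_Box_mono)
    then have "K4C (Imp (conjs (map Box ?L)) (Box \<phi>))"
      using K4C_Box_conjs[of ?L] by (auto intro: K4C_tautological_consequence[of "[_, _]"])
    then have "Box \<phi> \<in> G"
      by (rule MCS_derivable[OF G, rotated]) (use L in auto)
    with \<open>Box \<phi> \<notin> G\<close> show False
      by blast
  qed
  then obtain H where "?S \<subseteq> H" "MCS H"
    by (rule Lindenbaum)
  with MCS_Neg show thesis
    by (intro that) (auto simp: canonical_rel_def)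
qed

lemma MCS_next_set:
  assumes G: "MCS G"
  shows "MCS (next_set G)"
proof (rule MCS_if_consistent_complete)
  show "consistent (next_set G)"
    unfolding consistent_def
  proof
    assume "\<exists>L. set L \<subseteq> next_set G \<and> K4C (Neg (conjs L))"
    then obtain L where L: "set L \<subseteq> next_set G" "K4C (Neg (conjs L))"
      by blast
    have "K4C (Next (Neg (conjs L)))"
      using L(2) by (rule K4C.Nec_next)
    then have "K4C (Neg (Next (conjs L)))"
      using K4C.Next_neg[of "conjs L"] by (auto intro: K4C_tautological_consequence[of "[_, _]"])
    moreover have "Next (conjs L) \<in> G"
      by (rule MCS_derivable[OF G _ K4C_Next_conjs]) (use L in \<open>auto simp: next_set_def\<close>)
    ultimately show False
      using G MCS_K4C MCS_Neg by blast
  qed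
  show "\<phi> \<in> next_set G \<or> Neg \<phi> \<in> next_set G" for \<phi>
  proof -
    have "K4C (Imp (Neg (Next \<phi>)) (Next (Neg \<phi>)))"
      by (rule K4C_tautological_consequence[of "[Iff (Neg (Next \<phi>)) (Next (Neg \<phi>))]"])
        (use K4C.Next_neg in auto)
    then show ?thesis
      using MCS_K4C_Imp[OF G] MCS_Neg[OF G] by (auto simp: next_set_def)
  qed
qed

text \<open>This is where axiom C enters: if \<open>\<psi>\<close> separates the successors of \<open>G\<close> and \<open>H\<close>,
  then C applied to \<open>\<not>\<psi> \<rightarrow> \<phi>\<close> transfers \<open>\<circle>\<box>\<phi> \<in> G\<close> to \<open>\<phi> \<in> next_set H\<close>.\<close>

lemma canonical_rel_next_set:
  assumes G: "MCS G" and H: "MCS H" and R: "canonical_rel G H"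
  shows "next_set G = next_set H \<or> canonical_rel (next_set G) (next_set H)"
proof -
  have "canonical_rel (next_set G) (next_set H)" if "next_set G \<noteq> next_set H"
    unfolding canonical_rel_def
  proof (intro allI impI)
    obtain \<psi> where \<psi>: "Next \<psi> \<in> G" "\<psi> \<notin> next_set H"
      using \<open>next_set G \<noteq> next_set H\<close> MCS_subset_eq[OF MCS_next_set[OF G] MCS_next_set[OF H]]
      by (auto simp: next_set_def)
    fix \<phi>
    assume "Box \<phi> \<in> next_set G"
    then have "Next (Box \<phi>) \<in> G"
      by (simp add: next_set_def)
    let ?\<chi> = "Imp (Neg \<psi>) \<phi>"
    have "Next ?\<chi> \<in> G"
      using \<psi>(1) by (rule MCS_K4C_Imp[OF G K4C_Next_mono, rotated]) (rule K4C_tautI, simp)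
    moreover have "Next (Box ?\<chi>) \<in> G"
      using \<open>Next (Box \<phi>) \<in> G\<close>
      by (rule MCS_K4C_Imp[OF G K4C_Next_mono[OF K4C_Box_mono], rotated]) (rule K4C_tautI, simp)
    ultimately have "Box (Next ?\<chi>) \<in> G"
      using MCS_K4C_Imp[OF G K4C.C] MCS_And[OF G] by blast
    then have "?\<chi> \<in> next_set H"
      using R by (simp add: canonical_rel_def next_set_def)
    with \<psi>(2) show "\<phi> \<in> next_set H"
      using MCS_Imp[OF MCS_next_set[OF H]] MCS_Neg[OF MCS_next_set[OF H]] by blast
  qed
  then show ?thesis
    by blast
qed

section \<open>The up-set topology of an ordered set\<close>

definition upset_topology :: "'a::order set \<Rightarrow> 'a topology" where
  "upset_topology S = topology (\<lambda>U. U \<subseteq> S \<and> (\<forall>x\<in>U. \<forall>y\<in>S. x \<le> y \<longrightarrow> y \<in> U))"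

lemma openin_upset_topology:
  "openin (upset_topology S) U \<longleftrightarrow> U \<subseteq> S \<and> (\<forall>x\<in>U. \<forall>y\<in>S. x \<le> y \<longrightarrow> y \<in> U)"
proof -
  have "istopology (\<lambda>U. U \<subseteq> S \<and> (\<forall>x\<in>U. \<forall>y\<in>S. x \<le> y \<longrightarrow> y \<in> U))"
    unfolding istopology_def by blast
  then show ?thesis
    by (simp add: upset_topology_def topology_inverse')
qed

lemma topspace_upset_topology [simp]: "topspace (upset_topology S) = S"
proof (rule subset_antisym)
  show "topspace (upset_topology S) \<subseteq> S"
    by (meson openin_topspace openin_upset_topology)
  show "S \<subseteq> topspace (upset_topology S)"
    by (rule openin_subset) (simp add: openin_upset_topology)
qed

lemma openin_upset_topology_atLeast: "openin (upset_topology S) {y\<in>S. x \<le> y}"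
  by (auto simp: openin_upset_topology)

lemma closedin_upset_topology_atMost: "closedin (upset_topology S) {y\<in>S. y \<le> x}"
  unfolding closedin_def openin_upset_topology topspace_upset_topology
  by (auto intro: order_trans)

lemma derived_set_of_upset_topology:
  "upset_topology S derived_set_of A = {x\<in>S. \<exists>y\<in>A \<inter> S. x < y}"
proof (intro set_eqI iffI)
  fix x
  assume "x \<in> upset_topology S derived_set_of A"
  then have "x \<in> S" and
    nbhds: "\<forall>U. x \<in> U \<and> openin (upset_topology S) U \<longrightarrow> (\<exists>y. y \<noteq> x \<and> y \<in> A \<and> y \<in> U)"
    by (simp_all add: in_derived_set_of)
  then obtain y where "y \<noteq> x" "y \<in> A" "y \<in> S" "x \<le> y"
    using nbhds[rule_format, of "{y\<in>S. x \<le> y}"] openin_upset_topology_atLeast[of S x] by auto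
  with \<open>x \<in> S\<close> show "x \<in> {x\<in>S. \<exists>y\<in>A \<inter> S. x < y}"
    by (auto simp: order_less_le)
next
  fix x
  assume "x \<in> {x\<in>S. \<exists>y\<in>A \<inter> S. x < y}"
  then obtain y where "x \<in> S" "y \<in> A" "y \<in> S" "x < y"
    by blast
  show "x \<in> upset_topology S derived_set_of A"
    unfolding in_derived_set_of
  proof (intro conjI allI impI)
    show "x \<in> topspace (upset_topology S)"
      using \<open>x \<in> S\<close> by simp
    fix U
    assume "x \<in> U \<and> openin (upset_topology S) U"
    then have "y \<in> U"
      using \<open>y \<in> S\<close> \<open>x < y\<close> by (auto simp: openin_upset_topology)
    with \<open>y \<in> A\<close> \<open>x < y\<close> show "\<exists>z. z \<noteq> x \<and> z \<in> A \<and> z \<in> U"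
      by auto
  qed
qed

lemma TD_space_upset_topology: "TD_space (upset_topology S)"
  unfolding TD_space_def topspace_upset_topology
proof
  fix x
  assume "x \<in> S"
  then have "{x} = {y\<in>S. x \<le> y} \<inter> {y\<in>S. y \<le> x}"
    by auto
  with openin_upset_topology_atLeast closedin_upset_topology_atMost
  show "\<exists>U F. openin (upset_topology S) U \<and> closedin (upset_topology S) F \<and> {x} = U \<inter> F"
    by blast
qed

lemma continuous_map_upset_topology:
  assumes "f ` S \<subseteq> S" and "\<And>x y. x \<in> S \<Longrightarrow> y \<in> S \<Longrightarrow> x \<le> y \<Longrightarrow> f x \<le> f y"
  shows "continuous_map (upset_topology S) (upset_topology S) f"
  using assms by (auto simp: continuous_map_def openin_upset_topology)

section \<open>The canonical model\<close>

text \<open>Lists carry the prefix order of \<open>Prefix_Order\<close>, so \<open>xs < ys\<close> means that the chain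
  \<open>ys\<close> properly extends \<open>xs\<close>.\<close>

definition canonical_chains :: "'pv fm set list set" where
  "canonical_chains =
     {xs. xs \<noteq> [] \<and> (\<forall>G\<in>set xs. MCS G) \<and> successively canonical_rel xs}"

abbreviation canonical_topology :: "'pv fm set list topology" where
  "canonical_topology \<equiv> upset_topology canonical_chains"

definition canonical_map :: "'pv fm set list \<Rightarrow> 'pv fm set list" where
  "canonical_map xs = remdups_adj (map next_set xs)"

definition canonical_valuation :: "'pv \<Rightarrow> 'pv fm set list set" where
  "canonical_valuation p = {xs \<in> canonical_chains. Var p \<in> last xs}"

lemma successively_remdups_adj_reflclp:
  "successively (\<lambda>a b. a = b \<or> R a b) xs \<Longrightarrow> successively R (remdups_adj xs)"
  by (induction xs rule: remdups_adj.induct) (auto simp: successively_Cons)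

lemma canonical_map_chain:
  assumes xs: "xs \<in> canonical_chains"
  shows "canonical_map xs \<in> canonical_chains"
proof -
  have "\<forall>G\<in>set xs. MCS G" "successively canonical_rel xs"
    using xs by (auto simp: canonical_chains_def)
  then have "successively (\<lambda>G H. next_set G = next_set H \<or> canonical_rel (next_set G) (next_set H)) xs"
    by (induction xs rule: induct_list012) (auto simp: canonical_rel_next_set)
  then have "successively canonical_rel (canonical_map xs)"
    unfolding canonical_map_def
    by (intro successively_remdups_adj_reflclp) (simp add: successively_map)
  with xs show ?thesis
    by (auto simp: canonical_chains_def canonical_map_def MCS_next_set)
qed

lemma last_canonical_map: "xs \<noteq> [] \<Longrightarrow> last (canonical_map xs) = next_set (last xs)"
  by (simp add: canonical_map_def last_map)

lemma canonical_map_mono: "xs \<le> ys \<Longrightarrow> canonical_map xs \<le> canonical_map ys"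
  by (simp add: less_eq_list_def canonical_map_def prefix_remdups_adj map_mono_prefix)

lemma continuous_canonical_map: "continuous_map canonical_topology canonical_topology canonical_map"
  by (rule continuous_map_upset_topology) (auto simp: canonical_map_chain canonical_map_mono)

lemma canonical_rel_last_less:
  assumes xs: "xs \<in> canonical_chains" and ys: "ys \<in> canonical_chains" and "xs < ys"
  shows "canonical_rel (last xs) (last ys)"
proof -
  obtain zs where ys_eq: "ys = xs @ zs" and "zs \<noteq> []"
    using \<open>xs < ys\<close> by (auto simp: less_list_def' strict_prefix_def prefix_def)
  have "\<forall>G\<in>set ys. MCS G" "successively canonical_rel ys"
    using ys by (simp_all add: canonical_chains_def)
  then have "sorted_wrt canonical_rel ys"
    using successively_iff_sorted_wrt_strong[of ys canonical_rel] canonical_rel_trans by blast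
  with xs \<open>zs \<noteq> []\<close> show ?thesis
    by (auto simp: ys_eq sorted_wrt_append canonical_chains_def)
qed

lemma truth_lemma:
  "xs \<in> canonical_chains \<Longrightarrow>
     xs \<in> tset canonical_topology canonical_map canonical_valuation \<phi> \<longleftrightarrow> \<phi> \<in> last xs"
proof (induction \<phi> arbitrary: xs)
  case (Var p)
  then show ?case
    by (simp add: canonical_valuation_def)
next
  case (And a b)
  then show ?case
    by (auto simp: MCS_And canonical_chains_def)
next
  case (Neg a)
  then show ?case
    by (auto simp: MCS_Neg canonical_chains_def)
next
  case (Next a)
  have "canonical_map xs \<in> canonical_chains"
    using Next.prems by (rule canonical_map_chain)
  moreover have "xs \<noteq> []"
    using Next.prems by (simp add: canonical_chains_def)
  ultimately show ?case
    using Next by (simp add: last_canonical_map next_set_def)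
next
  case (Box a)
  have G: "MCS (last xs)"
    using Box.prems by (simp add: canonical_chains_def)
  have "xs \<in> tset canonical_topology canonical_map canonical_valuation (Box a)
        \<longleftrightarrow> (\<forall>ys\<in>canonical_chains. xs < ys \<longrightarrow> a \<in> last ys)"
    using Box by (auto simp: derived_set_of_upset_topology)
  also have "\<dots> \<longleftrightarrow> Box a \<in> last xs"
  proof
    assume extensions: "\<forall>ys\<in>canonical_chains. xs < ys \<longrightarrow> a \<in> last ys"
    show "Box a \<in> last xs"
    proof (rule ccontr)
      assume "Box a \<notin> last xs"
      with G obtain H where "MCS H" "canonical_rel (last xs) H" "a \<notin> H"
        by (rule canonical_rel_witness)
      moreover have "xs @ [H] \<in> canonical_chains"
        using Box.prems \<open>MCS H\<close> \<open>canonical_rel (last xs) H\<close>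
        by (auto simp: canonical_chains_def successively_append_iff)
      moreover have "xs < xs @ [H]"
        by (simp add: less_list_def' strict_prefix_def)
      ultimately show False
        using extensions by auto
    qed
  qed (use Box.prems canonical_rel_last_less in \<open>auto simp: canonical_rel_def\<close>)
  finally show ?case .
qed

lemma K4C_complete:
  fixes \<phi> :: "'pv fm"
  assumes "valid_TD TYPE('pv fm set list) \<phi>"
  shows "K4C \<phi>"
proof (rule ccontr)
  assume "\<not> K4C \<phi>"
  have "consistent {Neg \<phi>}"
    unfolding consistent_def
  proof
    assume "\<exists>L. set L \<subseteq> {Neg \<phi>} \<and> K4C (Neg (conjs L))"
    then obtain L where L: "set L \<subseteq> {Neg \<phi>}" "K4C (Neg (conjs L))"
      by blast
    have "K4C \<phi>"
      by (rule K4C_tautological_consequence[of "[Neg (conjs L)]"]) (use L in auto)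
    with \<open>\<not> K4C \<phi>\<close> show False
      by blast
  qed
  then obtain G where "Neg \<phi> \<in> G" "MCS G"
    using Lindenbaum by blast
  have valid: "valid_in (canonical_topology :: 'pv fm set list topology) canonical_map \<phi>"
    using assms TD_space_upset_topology continuous_canonical_map
    unfolding valid_TD_def DTS_def by blast
  have "[G] \<in> canonical_chains"
    using \<open>MCS G\<close> by (simp add: canonical_chains_def)
  moreover have "[G] \<notin> tset canonical_topology canonical_map canonical_valuation \<phi>"
    using truth_lemma[OF \<open>[G] \<in> canonical_chains\<close>] \<open>Neg \<phi> \<in> G\<close> MCS_Neg[OF \<open>MCS G\<close>] by simp
  ultimately show False
    using valid by (auto simp: valid_in_def canonical_valuation_def)
qed

section \<open>Soundness\<close>

lemma tset_subset_topspace: "\<forall>p. V p \<subseteq> topspace T \<Longrightarrow> tset T f V \<phi> \<subseteq> topspace T"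
  by (induction \<phi>) auto

lemma tv_tset:
  "x \<in> topspace T \<Longrightarrow> tv (\<lambda>\<psi>. x \<in> tset T f V \<psi>) \<phi> \<longleftrightarrow> x \<in> tset T f V \<phi>"
  by (induction \<phi>) auto

text \<open>Axiom 4: in a \<open>T\<^sub>D\<close> space, derived sets are closed. If \<open>W\<close> witnesses
  \<open>x \<notin> d(S)\<close> and \<open>{x} = U \<inter> F\<close>, then \<open>W \<inter> U - F\<close> is an open set missing \<open>S\<close>
  that contains every point of \<open>d(S) \<inter> W \<inter> U\<close> other than \<open>x\<close>.\<close>

lemma TD_space_derived_set_of_derived_set_of:
  assumes "TD_space X"
  shows "X derived_set_of (X derived_set_of S) \<subseteq> X derived_set_of S"
proof
  fix x
  assume "x \<in> X derived_set_of (X derived_set_of S)"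
  then have "x \<in> topspace X" and x_limit:
    "\<And>T. x \<in> T \<Longrightarrow> openin X T \<Longrightarrow> \<exists>y. y \<noteq> x \<and> y \<in> X derived_set_of S \<and> y \<in> T"
    by (auto simp: in_derived_set_of)
  show "x \<in> X derived_set_of S"
  proof (rule ccontr)
    assume "x \<notin> X derived_set_of S"
    with \<open>x \<in> topspace X\<close> obtain W where W: "openin X W" "x \<in> W" "\<forall>y\<in>W. y \<noteq> x \<longrightarrow> y \<notin> S"
      by (auto simp: in_derived_set_of)
    obtain U F where UF: "openin X U" "closedin X F" "{x} = U \<inter> F"
      using assms \<open>x \<in> topspace X\<close> unfolding TD_space_def by blast
    then have "x \<in> W \<inter> U" "openin X (W \<inter> U)"
      using W by auto
    then obtain y where y: "y \<noteq> x" "y \<in> X derived_set_of S" "y \<in> W \<inter> U"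
      using x_limit by blast
    then have y_limit: "\<And>T. y \<in> T \<Longrightarrow> openin X T \<Longrightarrow> \<exists>z. z \<noteq> y \<and> z \<in> S \<and> z \<in> T"
      by (auto simp: in_derived_set_of)
    have "y \<notin> F"
      using y(1,3) UF(3) by blast
    have "openin X (W \<inter> U - F)"
      using \<open>openin X (W \<inter> U)\<close> UF(2) by (rule openin_diff)
    moreover have "y \<in> W \<inter> U - F"
      using y(3) \<open>y \<notin> F\<close> by blast
    ultimately obtain z where "z \<noteq> y" "z \<in> S" "z \<in> W \<inter> U - F"
      using y_limit by meson
    moreover have "x \<in> F"
      using UF(3) by blast
    ultimately show False
      using W(3) by (metis DiffD1 DiffD2 IntD1)
  qed
qed

lemma continuous_map_preimage_not_derived:
  assumes f: "continuous_map X X f" and "x \<in> topspace X" and "f x \<notin> X derived_set_of S"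
    and "f x \<notin> S"
  shows "x \<notin> X derived_set_of {y \<in> topspace X. f y \<in> S}"
proof
  assume "x \<in> X derived_set_of {y \<in> topspace X. f y \<in> S}"
  then have x_limit: "\<And>T. x \<in> T \<Longrightarrow> openin X T \<Longrightarrow> \<exists>y. y \<noteq> x \<and> f y \<in> S \<and> y \<in> T"
    by (auto simp: in_derived_set_of)
  have "f x \<in> topspace X"
    using f \<open>x \<in> topspace X\<close> by (simp add: continuous_map_def Pi_iff)
  with \<open>f x \<notin> X derived_set_of S\<close> obtain U where U: "openin X U" "f x \<in> U" "\<forall>y\<in>U. y \<noteq> f x \<longrightarrow> y \<notin> S"
    by (auto simp: in_derived_set_of)
  have "openin X {y \<in> topspace X. f y \<in> U}"
    using f U(1) by (simp add: continuous_map_def)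
  moreover have "x \<in> {y \<in> topspace X. f y \<in> U}"
    using \<open>x \<in> topspace X\<close> U(2) by simp
  ultimately obtain y where "y \<noteq> x" "f y \<in> S" "f y \<in> U"
    using x_limit by (metis (no_types, lifting) mem_Collect_eq)
  with U(3) \<open>f x \<notin> S\<close> show False
    by auto
qed

theorem K4C_sound:
  assumes "K4C \<phi>" and TD: "TD_space T" and f: "continuous_map T T f"
    and V: "\<forall>p. V p \<subseteq> topspace T"
  shows "tset T f V \<phi> = topspace T"
proof -
  have sub: "tset T f V \<psi> \<subseteq> topspace T" for \<psi>
    using V by (rule tset_subset_topspace)
  show ?thesis
    using assms(1)
  proof (induction \<phi> rule: K4C.induct)
    case (Taut \<phi>)
    then show ?case
      using sub tv_tset by (fastforce simp: taut_def)
  next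
    case (K \<phi> \<psi>)
    let ?X = "topspace T" and ?t = "tset T f V"
    have "T derived_set_of (?X - ?t \<psi>)
          \<subseteq> T derived_set_of (?X - ?t (Imp \<phi> \<psi>)) \<union> T derived_set_of (?X - ?t \<phi>)"
      by (auto simp: Imp_def simp flip: derived_set_of_Un intro: derived_set_of_mono[THEN subsetD])
    then show ?case
      using derived_set_of_subset_topspace[of T] by (auto simp: Imp_def)
  next
    case (Four \<phi>)
    then show ?case
      using TD_space_derived_set_of_derived_set_of[OF TD] derived_set_of_subset_topspace[of T]
      by (auto simp: Imp_def Diff_Diff_Int inf_absorb2)
  next
    case (Next_neg \<phi>)
    then show ?case
      using f by (auto simp: Iff_def Imp_def continuous_map_def)
  next
    case (Next_and \<phi> \<psi>)
    then show ?case
      by (auto simp: Iff_def Imp_def)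
  next
    case (C \<phi>)
    let ?X = "topspace T" and ?t = "tset T f V"
    have "x \<notin> T derived_set_of (?X - ?t (Next \<phi>))"
      if "x \<in> ?X" "f x \<in> ?t \<phi>" "f x \<notin> T derived_set_of (?X - ?t \<phi>)" for x
    proof -
      have "?X - ?t (Next \<phi>) = {y \<in> ?X. f y \<in> ?X - ?t \<phi>}"
        using f by (auto simp: continuous_map_def)
      then show ?thesis
        using continuous_map_preimage_not_derived[OF f that(1,3)] that(2) by simp
    qed
    then show ?case
      using sub by (auto simp: Imp_def)
  next
    case (MP \<phi> \<psi>)
    then show ?case
      using sub[of \<psi>] by (auto simp: Imp_def)
  next
    case (Nec_box \<phi>)
    then show ?case
      by simp
  next
    case (Nec_next \<phi>)
    then show ?case
      using f by (auto simp: continuous_map_def)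
  qed
qed

lemma K4C_valid_TD: "K4C \<phi> \<Longrightarrow> valid_TD TYPE('a) \<phi>"
  by (auto simp: valid_TD_def valid_in_def DTS_def K4C_sound)

section \<open>Transfer of validity along injections\<close>

lemma TD_space_homeomorphic_map:
  assumes h: "homeomorphic_map X Y h" and "TD_space X"
  shows "TD_space Y"
  unfolding TD_space_def
proof
  fix y
  assume "y \<in> topspace Y"
  then obtain x where x: "x \<in> topspace X" "y = h x"
    using homeomorphic_imp_surjective_map[OF h] by blast
  then obtain U F where UF: "openin X U" "closedin X F" "{x} = U \<inter> F"
    using \<open>TD_space X\<close> unfolding TD_space_def by blast
  have "{y} = h ` U \<inter> h ` F"
    using x UF homeomorphic_imp_injective_map[OF h]
    by (metis image_empty image_insert inj_on_image_Int openin_subset closedin_subset)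
  moreover have "openin Y (h ` U)" "closedin Y (h ` F)"
    using UF h by (simp_all add: homeomorphic_map_openness openin_subset
        homeomorphic_map_closedness closedin_subset)
  ultimately show "\<exists>U F. openin Y U \<and> closedin Y F \<and> {y} = U \<inter> F"
    by blast
qed

lemma homeomorphic_maps_pullback_inv:
  assumes "inj h"
  shows "homeomorphic_maps X (pullback_topology (h ` topspace X) (inv h) X) h (inv h)"
  unfolding homeomorphic_maps_def
proof (intro conjI ballI)
  show "continuous_map X (pullback_topology (h ` topspace X) (inv h) X) h"
    using assms by (intro continuous_map_pullback') (auto simp: inv_o_cancel)
  show "continuous_map (pullback_topology (h ` topspace X) (inv h) X) X (inv h)"
    using continuous_map_pullback[OF continuous_map_id] by (metis id_comp)
  show "inv h (h x) = x" for x
    using assms by simp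
  show "h (inv h y) = y" if "y \<in> topspace (pullback_topology (h ` topspace X) (inv h) X)" for y
    using that assms by (auto simp: topspace_pullback_topology)
qed

lemma tset_homeomorphic_maps:
  assumes hk: "homeomorphic_maps X Y h k" and f: "f \<in> topspace X \<rightarrow> topspace X"
    and V: "\<forall>p. V p \<subseteq> topspace X"
  shows "tset Y (h \<circ> f \<circ> k) (\<lambda>p. h ` V p) \<phi> = h ` tset X f V \<phi>"
proof (induction \<phi>)
  have h: "homeomorphic_map X Y h"
    using hk homeomorphic_map_maps by blast
  have inj: "inj_on h (topspace X)" and Y: "topspace Y = h ` topspace X"
    using homeomorphic_imp_injective_map[OF h] homeomorphic_imp_surjective_map[OF h] by auto
  have sub: "tset X f V \<psi> \<subseteq> topspace X" for \<psi>
    using V by (rule tset_subset_topspace)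
  have compl: "topspace Y - h ` A = h ` (topspace X - A)" if "A \<subseteq> topspace X" for A
    using inj that by (simp add: Y inj_on_image_set_diff)
  { case (Var p)
    show ?case
      by simp
  next
    case (And a b)
    then show ?case
      using inj sub by (simp add: inj_on_image_Int)
  next
    case (Neg a)
    then show ?case
      using compl sub by simp
  next
    case (Box a)
    have "Y derived_set_of (h ` (topspace X - tset X f V a))
          = h ` (X derived_set_of (topspace X - tset X f V a))"
      using h by (simp add: homeomorphic_map_derived_set_of)
    with Box show ?case
      using compl sub derived_set_of_subset_topspace[of X] by simp
  next
    case (Next a)
    let ?A = "tset X f V a"
    have kh: "\<And>x. x \<in> topspace X \<Longrightarrow> k (h x) = x"
      using hk by (simp add: homeomorphic_maps_def)
    have "h (f x) \<in> h ` ?A \<longleftrightarrow> f x \<in> ?A" if "x \<in> topspace X" for x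
      using inj f sub that by (meson PiE inj_on_image_mem_iff)
    then have "{x \<in> topspace X. h (f x) \<in> h ` ?A} = {x \<in> topspace X. f x \<in> ?A}"
      by blast
    moreover have "{y \<in> topspace Y. (h \<circ> f \<circ> k) y \<in> h ` ?A} = h ` {x \<in> topspace X. h (f x) \<in> h ` ?A}"
      by (force simp: Y kh)
    ultimately show ?case
      using Next by simp
  }
qed

lemma valid_in_homeomorphic_maps:
  fixes \<phi> :: "'pv fm"
  assumes hk: "homeomorphic_maps X Y h k" and f: "f \<in> topspace X \<rightarrow> topspace X"
    and "valid_in Y (h \<circ> f \<circ> k) \<phi>"
  shows "valid_in X f \<phi>"
  unfolding valid_in_def
proof (intro allI impI)
  fix V :: "'pv \<Rightarrow> _"
  assume V: "\<forall>p. V p \<subseteq> topspace X"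
  have h: "homeomorphic_map X Y h"
    using hk homeomorphic_map_maps by blast
  have "h ` tset X f V \<phi> = tset Y (h \<circ> f \<circ> k) (\<lambda>p. h ` V p) \<phi>"
    using tset_homeomorphic_maps[OF hk f V] by simp
  also have "\<dots> = topspace Y"
    using \<open>valid_in Y _ \<phi>\<close> V homeomorphic_imp_surjective_map[OF h] unfolding valid_in_def
    by (metis image_mono)
  also have "\<dots> = h ` topspace X"
    using homeomorphic_imp_surjective_map[OF h] by simp
  finally show "tset X f V \<phi> = topspace X"
    using homeomorphic_imp_injective_map[OF h] tset_subset_topspace[OF V]
    by (simp add: inj_on_image_eq_iff)
qed

lemma valid_TD_inj_transfer:
  assumes "inj (h :: 'a \<Rightarrow> 'b)" and "valid_TD TYPE('b) \<phi>"
  shows "valid_TD TYPE('a) \<phi>"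
  unfolding valid_TD_def DTS_def
proof (intro allI impI)
  fix T :: "'a topology" and f
  assume "TD_space T \<and> continuous_map T T f"
  then have TD: "TD_space T" and f: "continuous_map T T f"
    by auto
  let ?Y = "pullback_topology (h ` topspace T) (inv h) T"
  have hk: "homeomorphic_maps T ?Y h (inv h)"
    using assms(1) by (rule homeomorphic_maps_pullback_inv)
  then have "TD_space ?Y"
    using TD TD_space_homeomorphic_map homeomorphic_map_maps by blast
  moreover have "continuous_map ?Y ?Y (h \<circ> f \<circ> inv h)"
    using hk f by (auto simp: homeomorphic_maps_def intro: continuous_map_compose)
  ultimately have "valid_in ?Y (h \<circ> f \<circ> inv h) \<phi>"
    using assms(2) by (simp add: valid_TD_def DTS_def)
  moreover have "f \<in> topspace T \<rightarrow> topspace T"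
    using f by (simp add: continuous_map_def)
  ultimately show "valid_in T f \<phi>"
    using hk by (blast intro: valid_in_homeomorphic_maps)
qed

section \<open>Encoding chains as sets of formulas\<close>

fun index_fm :: "nat \<Rightarrow> 'pv fm" where
  "index_fm 0 = Var undefined"
| "index_fm (Suc i) = Neg (index_fm i)"

lemma inj_index_fm: "inj index_fm"
proof (rule injI)
  show "index_fm i = index_fm j \<Longrightarrow> i = j" for i j :: nat
    by (induction i arbitrary: j) (case_tac j; simp)+
qed

definition encode_list :: "'pv fm set list \<Rightarrow> 'pv fm set" where
  "encode_list L = {Box (index_fm i) | i. i < length L}
                 \<union> {And (index_fm i) \<psi> | i \<psi>. i < length L \<and> \<psi> \<in> L ! i}"

lemma inj_encode_list: "inj encode_list"
proof (rule injI)
  fix L M :: "'pv fm set list"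
  assume eq: "encode_list L = encode_list M"
  have length: "{i. Box (index_fm i) \<in> encode_list L} = {..<length L}" for L :: "'pv fm set list"
    using inj_index_fm by (auto simp: encode_list_def dest: injD)
  have nth: "L ! i = {\<psi>. And (index_fm i) \<psi> \<in> encode_list L}" if "i < length L"
    for L :: "'pv fm set list" and i
    using inj_index_fm that by (auto simp: encode_list_def dest: injD)
  have "length L = length M"
    using length[of L] length[of M] eq by (metis lessThan_eq_iff)
  then show "L = M"
    using nth[of _ L] nth[of _ M] eq by (simp add: nth_equalityI)
qed

theorem mainTheorem5:
  fixes \<phi> :: "'pv fm"
  shows "(K4C \<phi> \<longrightarrow> valid_TD TYPE('a) \<phi>)
       \<and> ((\<exists>g :: 'pv fm set \<Rightarrow> 'b. inj g) \<and> valid_TD TYPE('b) \<phi> \<longrightarrow> K4C \<phi>)"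
proof (intro conjI impI)
  show "valid_TD TYPE('a) \<phi>" if "K4C \<phi>"
    using that by (rule K4C_valid_TD)
next
  assume "(\<exists>g :: 'pv fm set \<Rightarrow> 'b. inj g) \<and> valid_TD TYPE('b) \<phi>"
  then obtain g :: "'pv fm set \<Rightarrow> 'b" where "inj g" and valid: "valid_TD TYPE('b) \<phi>"
    by blast
  have "inj (g \<circ> encode_list)"
    using \<open>inj g\<close> inj_encode_list by (rule inj_compose)
  then have "valid_TD TYPE('pv fm set list) \<phi>"
    using valid by (rule valid_TD_inj_transfer)
  then show "K4C \<phi>"
    by (rule K4C_complete)
qed

end
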